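(* Let $(a_k)_{k\ge1}$ be positive integers, $M_0=0$, $M_1=0^{a_1-1}1$, $M_{k+1}=M_k^{a_{k+1}}M_{k-1}$ ($k\ge1$), $q_k=|M_k|$, and $\tilde M_k=(M_kM_{k-1})^{--}$ for $k\ge1$. Let $k\ge1$ and let $\mathbf{x}$ be an infinite word of the form $\mathbf{x}=UV\cdots$ (i.e. $UV$ is a prefix of $\mathbf{x}$), where $U$ is a finite word and $V$ is a factor of $M_k\tilde M_{k+1}$ with $|V|>q_k$. Then $r(|V|-q_k,\mathbf{x})\le|UV|$.
   Context: $|W|$ denotes the length of a word $W$; $W^{--}$ denotes $W$ deprived of its last two letters. For $\mathbf{x}=x_1x_2\ldots$, $x_i^j=x_i\cdots x_j$ and $r(n,\mathbf{x})=\min\{m\ge1:\ x_i^{i+n-1}=x_{m-n+1}^{m}\text{ for some } 1\le i\le m-n\}$. *)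

theory Defs
  imports Main
begin

text \<open>Words are lists over nat (letters 0 and 1). The sequence (a_k)_{k>=1} is a function
  a :: nat => nat, of which only the values a 1, a 2, ... are used.\<close>

fun Mw :: "(nat \<Rightarrow> nat) \<Rightarrow> nat \<Rightarrow> nat list" where
  "Mw a 0 = [0]"
| "Mw a (Suc 0) = replicate (a 1 - 1) 0 @ [1]"
| "Mw a (Suc (Suc k)) = concat (replicate (a (Suc (Suc k))) (Mw a (Suc k))) @ Mw a k"

definition q :: "(nat \<Rightarrow> nat) \<Rightarrow> nat \<Rightarrow> nat" where
  "q a k = length (Mw a k)"

definition dropLast2 :: "'b list \<Rightarrow> 'b list" where
  "dropLast2 W = take (length W - 2) W"

definition Mtilde :: "(nat \<Rightarrow> nat) \<Rightarrow> nat \<Rightarrow> nat list" where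
  "Mtilde a k = dropLast2 (Mw a k @ Mw a (k - 1))"

definition is_factor :: "'b list \<Rightarrow> 'b list \<Rightarrow> bool" where
  "is_factor V W \<longleftrightarrow> (\<exists>P S. W = P @ V @ S)"

text \<open>Infinite words x = x_1 x_2 ... are functions nat => 'b with x_i = x (i - 1)
  (0-based storage). r(n,x) = min{m >= 1 : x_i^{i+n-1} = x_{m-n+1}^m for some 1 <= i <= m-n}.\<close>
definition r :: "nat \<Rightarrow> (nat \<Rightarrow> 'b) \<Rightarrow> nat" where
  "r n x = (LEAST m. 1 \<le> m \<and>
     (\<exists>i. 1 \<le> i \<and> i + n \<le> m \<and> (\<forall>j<n. x (i - 1 + j) = x (m - n + j))))"

definition is_prefix_of_inf :: "'b list \<Rightarrow> (nat \<Rightarrow> 'b) \<Rightarrow> bool" where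
  "is_prefix_of_inf W x \<longleftrightarrow> (\<forall>j<length W. x j = W ! j)"

end

theory Submission
  imports Defs "HOL-Library.Sublist"
begin

text \<open>The words M_k M_{k+1} and M_{k+1} M_k differ only by a swap of their last two
  letters, so tilde M_{k+1} = M_k^{a_{k+1}} (M_k M_{k-1})^{--}, and (M_k M_{k-1})^{--} is a prefix
  of M_k M_k. Hence M_k tilde M_{k+1} is a prefix of a power of M_k and has period q_k, and so does
  its factor V. The prefix of V of length |V| - q_k thus reappears as the suffix of V, which ends
  at position |UV| of x.\<close>

definition has_period :: "nat \<Rightarrow> 'b list \<Rightarrow> bool" where
  "has_period p W \<longleftrightarrow> (\<forall>j. j + p < length W \<longrightarrow> W ! j = W ! (j + p))"

lemma concat_replicate_commute: "M @ concat (replicate n M) = concat (replicate n M) @ M"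
  by (induction n) auto

lemma has_period_prefix_concat_replicate:
  assumes "prefix W (concat (replicate N M))"
  shows "has_period (length M) W"
  unfolding has_period_def
proof (intro allI impI)
  fix j assume j: "j + length M < length W"
  obtain N' where N: "N = Suc N'"
    using assms j prefix_length_le by (cases N) fastforce+
  define L where "L = concat (replicate N' M)"
  have L_M: "concat (replicate N M) = L @ M" and M_L: "concat (replicate N M) = M @ L"
    by (simp_all add: N L_def concat_replicate_commute)
  have "j < length L"
    using j prefix_length_le[OF assms] by (simp add: M_L)
  then have "concat (replicate N M) ! (j + length M) = L ! j"
    by (simp add: M_L nth_append)
  also have "L ! j = concat (replicate N M) ! j"
    using \<open>j < length L\<close> by (simp add: L_M nth_append)
  finally have "concat (replicate N M) ! (j + length M) = concat (replicate N M) ! j" .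
  with assms j show "W ! j = W ! (j + length M)"
    by (metis add_lessD1 prefix_def nth_append)
qed

lemma has_period_factor:
  assumes "has_period p (P @ V @ S)"
  shows "has_period p V"
  unfolding has_period_def
proof (intro allI impI)
  fix j assume "j + p < length V"
  with assms[unfolded has_period_def, rule_format, of "length P + j"]
  show "V ! j = V ! (j + p)"
    by (simp add: nth_append add.assoc)
qed

lemma r_le_of_has_period:
  assumes x: "is_prefix_of_inf (U @ V) x"
    and per: "has_period p V" and "0 < p" "p < length V"
  shows "r (length V - p) x \<le> length (U @ V)"
proof -
  define n where "n = length V - p"
  have x_V: "x (length U + j) = V ! j" if "j < length V" for j
    using x that unfolding is_prefix_of_inf_def
    by (metis add_less_cancel_left length_append nth_append_length_plus)
  have "\<forall>j<n. x (length U + 1 - 1 + j) = x (length (U @ V) - n + j)"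
  proof (intro allI impI)
    fix j assume "j < n"
    then have "x (length U + j) = x (length U + (j + p))"
      using per x_V \<open>p < length V\<close> unfolding has_period_def n_def by simp
    then show "x (length U + 1 - 1 + j) = x (length (U @ V) - n + j)"
      using \<open>p < length V\<close> by (simp add: n_def ac_simps)
  qed
  moreover have "1 \<le> length U + 1" "length U + 1 + n \<le> length (U @ V)" "1 \<le> length (U @ V)"
    using \<open>0 < p\<close> \<open>p < length V\<close> by (simp_all add: n_def)
  ultimately have "1 \<le> length (U @ V) \<and> (\<exists>i. 1 \<le> i \<and> i + n \<le> length (U @ V) \<and>
      (\<forall>j<n. x (i - 1 + j) = x (length (U @ V) - n + j)))"
    by blast
  then show ?thesis
    unfolding r_def n_def[symmetric] by (rule Least_le)
qed

lemma Mw_not_Nil: "Mw a k \<noteq> []"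
  by (induction a k rule: Mw.induct) auto

text \<open>The identity propagates through the recursion because M_{k+1} commutes with its
  powers.\<close>
lemma Mw_append_swap:
  "\<exists>P c d. Mw a (Suc k) @ Mw a k = P @ [c, d] \<and> Mw a k @ Mw a (Suc k) = P @ [d, c]"
proof (induction k)
  case 0
  have "[0::nat] @ replicate (a 1 - 1) 0 = replicate (a 1 - 1) 0 @ [0]"
    by (simp add: replicate_append_same)
  then show ?case
    by (intro exI[of _ "replicate (a 1 - 1) 0"] exI[of _ 1] exI[of _ 0]) simp
next
  case (Suc k)
  then obtain P c d where
    IH: "Mw a (Suc k) @ Mw a k = P @ [c, d]" "Mw a k @ Mw a (Suc k) = P @ [d, c]"
    by blast
  define C where "C = concat (replicate (a (Suc (Suc k))) (Mw a (Suc k)))"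
  have M: "Mw a (Suc (Suc k)) = C @ Mw a k"
    by (simp add: C_def)
  have C: "Mw a (Suc k) @ C = C @ Mw a (Suc k)"
    unfolding C_def by (rule concat_replicate_commute)
  have "Mw a (Suc (Suc k)) @ Mw a (Suc k) = (C @ P) @ [d, c]"
    using IH(2) M by simp
  moreover have "Mw a (Suc k) @ Mw a (Suc (Suc k)) = (C @ P) @ [c, d]"
    using IH(1) M C by (metis append.assoc)
  ultimately show ?case by blast
qed

lemma dropLast2_append_snoc2: "dropLast2 (P @ [c, d]) = P"
  by (simp add: dropLast2_def)

lemma dropLast2_append: "2 \<le> length Y \<Longrightarrow> dropLast2 (X @ Y) = X @ dropLast2 Y"
  by (simp add: dropLast2_def)

lemma dropLast2_prefix: "prefix (dropLast2 W) W"
  by (simp add: dropLast2_def take_is_prefix)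

lemma dropLast2_Mw_append_commute:
  "dropLast2 (Mw a k @ Mw a (Suc k)) = dropLast2 (Mw a (Suc k) @ Mw a k)"
  using Mw_append_swap[of a k] dropLast2_append_snoc2 by metis

lemma Mtilde_Suc_Suc:
  "Mtilde a (Suc (Suc k)) =
     concat (replicate (a (Suc (Suc k))) (Mw a (Suc k))) @ dropLast2 (Mw a (Suc k) @ Mw a k)"
proof -
  have "2 \<le> length (Mw a k @ Mw a (Suc k))"
    using Mw_not_Nil[of a k] Mw_not_Nil[of a "Suc k"]
    by (cases "Mw a k"; cases "Mw a (Suc k)") auto
  then show ?thesis
    by (simp add: Mtilde_def dropLast2_append dropLast2_Mw_append_commute)
qed

lemma dropLast2_Mw_prefix:
  assumes "0 < a (Suc k)"
  shows "prefix (dropLast2 (Mw a (Suc k) @ Mw a k)) (Mw a (Suc k) @ Mw a (Suc k))"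
proof (cases k)
  case 0
  then show ?thesis by (simp add: dropLast2_def take_is_prefix)
next
  case (Suc k')
  with assms have "prefix (Mw a k) (Mw a (Suc k))"
    by (cases "a (Suc k)") auto
  then have "prefix (Mw a (Suc k) @ Mw a k) (Mw a (Suc k) @ Mw a (Suc k))"
    by simp
  then show ?thesis
    using dropLast2_prefix prefix_order.trans by blast
qed

lemma Mw_Mtilde_prefix_power:
  assumes "0 < a (Suc k)"
  shows "prefix (Mw a (Suc k) @ Mtilde a (Suc (Suc k)))
                (concat (replicate (a (Suc (Suc k)) + 3) (Mw a (Suc k))))"
proof -
  define M where "M = Mw a (Suc k)"
  define C where "C = concat (replicate (a (Suc (Suc k))) M)"
  have "prefix (M @ Mtilde a (Suc (Suc k))) (M @ C @ M @ M)"
    using dropLast2_Mw_prefix[of a k, OF assms] by (simp add: Mtilde_Suc_Suc M_def C_def)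
  moreover have "M @ C @ M @ M = concat (replicate (a (Suc (Suc k)) + 3) M)"
    by (simp add: C_def concat_replicate_commute numeral_3_eq_3)
  ultimately show ?thesis
    unfolding M_def by (simp only:)
qed

theorem lemma7p4:
  fixes a :: "nat \<Rightarrow> nat" and k :: nat and x :: "nat \<Rightarrow> nat" and U V :: "nat list"
  assumes "\<forall>j\<ge>1. a j > 0"
    and "k \<ge> 1"
    and "is_prefix_of_inf (U @ V) x"
    and "is_factor V (Mw a k @ Mtilde a (k + 1))"
    and "length V > q a k"
  shows "r (length V - q a k) x \<le> length (U @ V)"
proof -
  obtain k' where k: "k = Suc k'" using \<open>k \<ge> 1\<close> by (cases k) auto
  have "has_period (q a k) (Mw a k @ Mtilde a (k + 1))"
    using Mw_Mtilde_prefix_power[of a k'] has_period_prefix_concat_replicate assms(1)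
    by (simp add: k q_def)
  then have "has_period (q a k) V"
    using assms(4) has_period_factor unfolding is_factor_def by metis
  moreover have "0 < q a k"
    by (simp add: q_def Mw_not_Nil)
  ultimately show ?thesis
    using r_le_of_has_period assms(3,5) by blast
qed

end
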